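(* Let $\mathcal{F}$ be a $3$-uniform linear set system with maximum matching size $\nu(\mathcal{F})=\nu$ and maximum degree $\Delta(\mathcal{F})=\Delta$. If $\Delta\geq 5$, then $|\mathcal{F}|\leq 2\Delta\nu$.
   Context: A set system $\mathcal{F}$ is a finite collection of distinct subsets of a vertex set $V$. It is $3$-uniform if every member has exactly $3$ elements, and linear if $|A\cap B|\leq 1$ for all distinct $A,B\in\mathcal{F}$. A matching is a collection of pairwise disjoint members of $\mathcal{F}$; $\nu(\mathcal{F})$ is the maximum size of a matching. For a vertex $x$, $\mathcal{F}_x=\{A\in\mathcal{F}: x\in A\}$, and $\Delta(\mathcal{F})=\max_x|\mathcal{F}_x|$. *)

theory Defs
  imports Main
begin

definition uniform3 :: "'a set set \<Rightarrow> bool" where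
  "uniform3 F \<longleftrightarrow> (\<forall>A\<in>F. card A = 3)"

definition linear_sys :: "'a set set \<Rightarrow> bool" where
  "linear_sys F \<longleftrightarrow> (\<forall>A\<in>F. \<forall>B\<in>F. A \<noteq> B \<longrightarrow> card (A \<inter> B) \<le> 1)"

definition is_matching :: "'a set set \<Rightarrow> 'a set set \<Rightarrow> bool" where
  "is_matching F M \<longleftrightarrow> M \<subseteq> F \<and> (\<forall>A\<in>M. \<forall>B\<in>M. A \<noteq> B \<longrightarrow> A \<inter> B = {})"

definition matching_number :: "'a set set \<Rightarrow> nat" where
  "matching_number F = Max (card ` {M. is_matching F M})"

definition star :: "'a set set \<Rightarrow> 'a \<Rightarrow> 'a set set" where
  "star F x = {A\<in>F. x \<in> A}"

definition max_degree :: "'a set set \<Rightarrow> nat" where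
  "max_degree F = Max ({card (star F x) | x. x \<in> \<Union>F} \<union> {0})"

end

theory Submission
  imports Defs
begin

text \<open>
  Fix a maximum matching \<open>M\<close> and put \<open>V = \<Union>M\<close>. By maximality every \<open>A \<in> F - M\<close> meets \<open>V\<close>,
  so \<open>|A \<inter> V|\<close>, plus one if \<open>A\<close> is pendant (meets \<open>V\<close> in a single vertex), is at least 2.
  Summing over \<open>A\<close> and regrouping by vertices of \<open>V\<close>: each vertex lies in at most \<open>\<Delta> - 1\<close>
  members outside \<open>M\<close>. If a vertex \<open>v\<close> of \<open>e \<in> M\<close> carries three pendant members, no other
  vertex \<open>u\<close> of \<open>e\<close> carries one: by linearity one of the three misses a pendant member at \<open>u\<close>,
  and the two could replace \<open>e\<close> in \<open>M\<close>. So the pendant count on \<open>e\<close> is at most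
  \<open>max (\<Delta> - 1) 6 = \<Delta> + 1\<close>, the total on \<open>e\<close> at most \<open>4\<Delta> - 2\<close>, and \<open>2 |F - M| \<le> (4\<Delta> - 2) \<nu>\<close>.
\<close>

lemma uniform3_finite_member: "uniform3 F \<Longrightarrow> A \<in> F \<Longrightarrow> finite A"
  unfolding uniform3_def by (metis card.infinite zero_neq_numeral)

lemma uniform3_finite_Union: "finite F \<Longrightarrow> uniform3 F \<Longrightarrow> finite (\<Union>F)"
  using uniform3_finite_member by blast

lemma linear_sys_Int_eq_singleton:
  assumes "linear_sys F" "A \<in> F" "B \<in> F" "A \<noteq> B" "x \<in> A" "x \<in> B" "finite A"
  shows "A \<inter> B = {x}"
proof -
  have "card (A \<inter> B) \<le> Suc 0" using assms unfolding linear_sys_def by auto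
  then show ?thesis using assms card_le_Suc0_iff_eq[of "A \<inter> B"] by auto
qed

lemma linear_sys_star_avoids_member:
  assumes lin: "linear_sys F" and unif: "uniform3 F"
    and f: "f1 \<in> F" "f2 \<in> F" "f3 \<in> F" "f1 \<noteq> f2" "f1 \<noteq> f3" "f2 \<noteq> f3"
    and v: "v \<in> f1" "v \<in> f2" "v \<in> f3" "v \<notin> g"
    and g: "g \<in> F" "u \<in> g" "u \<notin> f1 \<union> f2 \<union> f3"
  shows "\<exists>f\<in>{f1, f2, f3}. f \<inter> g = {}"
proof (rule ccontr)
  assume "\<not> ?thesis"
  then have "f1 \<inter> g \<noteq> {}" "f2 \<inter> g \<noteq> {}" "f3 \<inter> g \<noteq> {}" by simp_all
  then obtain x1 x2 x3 where x: "x1 \<in> f1 \<inter> g" "x2 \<in> f2 \<inter> g" "x3 \<in> f3 \<inter> g"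
    by (meson ex_in_conv)
  have fin: "finite f1" "finite f2"
    using uniform3_finite_member[OF unif f(1)] uniform3_finite_member[OF unif f(2)] by blast+
  have "f1 \<inter> f2 = {v}" "f1 \<inter> f3 = {v}" "f2 \<inter> f3 = {v}"
    using linear_sys_Int_eq_singleton[OF lin f(1,2,4) v(1,2) fin(1)]
      linear_sys_Int_eq_singleton[OF lin f(1,3,5) v(1,3) fin(1)]
      linear_sys_Int_eq_singleton[OF lin f(2,3,6) v(2,3) fin(2)] by blast+
  then have "x1 \<noteq> x2" "x1 \<noteq> x3" "x2 \<noteq> x3" using x v(4) by auto
  then have "card {x1, x2, x3} = 3" by simp
  moreover have "card {x1, x2, x3} \<le> card (g - {u})"
    using x g(3) uniform3_finite_member[OF unif g(1)] by (intro card_mono) blast+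
  moreover have "card (g - {u}) = 2" using unif g(1,2) unfolding uniform3_def by simp
  ultimately show False by simp
qed

lemma two_le_card_plus_singleton:
  assumes "finite S" "S \<noteq> {}"
  shows "2 \<le> card S + card {v. S = {v}}"
proof (cases "card S = 1")
  case True
  then obtain x where "S = {x}" by (auto simp: card_1_singleton_iff)
  then show ?thesis by simp
next
  case False
  moreover have "card S \<noteq> 0" using assms by simp
  ultimately show ?thesis by linarith
qed

lemma card_star_le_max_degree:
  assumes "finite (\<Union>F)" "x \<in> \<Union>F"
  shows "card (star F x) \<le> max_degree F"
proof -
  have "{card (star F y) | y. y \<in> \<Union>F} = (\<lambda>y. card (star F y)) ` \<Union>F" by auto
  then show ?thesis unfolding max_degree_def using assms by (intro Max_ge) auto
qed

lemma finite_matchings: "finite F \<Longrightarrow> finite {M. is_matching F M}"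
  by (rule finite_subset[of _ "Pow F"]) (auto simp: is_matching_def)

lemma card_le_matching_number: "finite F \<Longrightarrow> is_matching F M \<Longrightarrow> card M \<le> matching_number F"
  unfolding matching_number_def using finite_matchings by (intro Max_ge) auto

lemma matching_number_attained:
  assumes "finite F"
  obtains M where "is_matching F M" "card M = matching_number F"
proof -
  have "{} \<in> {M. is_matching F M}" by (simp add: is_matching_def)
  then have "matching_number F \<in> card ` {M. is_matching F M}"
    unfolding matching_number_def using finite_matchings[OF assms] by (intro Max_in) auto
  then show ?thesis using that by auto
qed

lemma is_matching_subset: "is_matching F M \<Longrightarrow> N \<subseteq> M \<Longrightarrow> is_matching F N"
  unfolding is_matching_def by blast

lemma is_matching_insert:
  "is_matching F M \<Longrightarrow> A \<in> F \<Longrightarrow> A \<inter> \<Union>M = {} \<Longrightarrow> is_matching F (insert A M)"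
  unfolding is_matching_def by blast

definition pendant :: "'a set set \<Rightarrow> 'a set set \<Rightarrow> 'a \<Rightarrow> 'a set set" where
  "pendant F M v = {A \<in> F - M. A \<inter> \<Union>M = {v}}"

locale maximum_matching =
  fixes F M :: "'a set set"
  assumes finite_F: "finite F"
    and matching: "is_matching F M"
    and maximum: "\<And>M'. is_matching F M' \<Longrightarrow> card M' \<le> card M"
begin

lemma subset: "M \<subseteq> F"
  using matching unfolding is_matching_def by blast

lemma finite_M: "finite M"
  using subset finite_F finite_subset by blast

lemma disjoint: "A \<in> M \<Longrightarrow> B \<in> M \<Longrightarrow> A \<noteq> B \<Longrightarrow> A \<inter> B = {}"
  using matching unfolding is_matching_def by blast

lemma member_meets_Union:
  assumes "A \<in> F" "A \<noteq> {}"
  shows "A \<inter> \<Union>M \<noteq> {}"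
proof
  assume empty: "A \<inter> \<Union>M = {}"
  then have "A \<notin> M" using assms(2) by blast
  moreover have "card (insert A M) \<le> card M"
    using maximum is_matching_insert[OF matching assms(1) empty] by blast
  ultimately show False using finite_M by simp
qed

lemma no_two_for_one_exchange:
  assumes e: "e \<in> M"
    and f: "f \<in> F" "f \<notin> M" "f \<inter> \<Union>M \<subseteq> e"
    and g: "g \<in> F" "g \<notin> M" "g \<inter> \<Union>M \<subseteq> e"
    and fg: "f \<inter> g = {}" "f \<noteq> g"
  shows False
proof -
  define N where "N = M - {e}"
  have avoids: "A \<inter> \<Union>N = {}" if "A \<inter> \<Union>M \<subseteq> e" for A
    using that disjoint e unfolding N_def by blast
  have "is_matching F (insert g N)"
    using is_matching_insert[OF is_matching_subset[OF matching] g(1) avoids[OF g(3)]]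
    unfolding N_def by blast
  then have "is_matching F (insert f (insert g N))"
    using is_matching_insert f(1) avoids[OF f(3)] fg(1) by blast
  then have "card (insert f (insert g N)) \<le> card M" by (rule maximum)
  moreover have "card (insert f (insert g N)) = card M + 1"
    using f(2) g(2) fg(2) e finite_M card_Suc_Diff1[OF finite_M e] unfolding N_def by auto
  ultimately show False by simp
qed

lemma pendant_exclusive:
  assumes lin: "linear_sys F" and unif: "uniform3 F"
    and e: "e \<in> M" "u \<in> e" "v \<in> e" "u \<noteq> v"
    and three: "3 \<le> card (pendant F M v)"
  shows "pendant F M u = {}"
proof
  show "pendant F M u \<subseteq> {}"
  proof
    fix g assume g: "g \<in> pendant F M u"
    obtain T where "T \<subseteq> pendant F M v" "card T = 3"
      using obtain_subset_with_card_n[OF three] by blast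
    then obtain f1 f2 f3 where f: "{f1, f2, f3} \<subseteq> pendant F M v" "f1 \<noteq> f2" "f1 \<noteq> f3" "f2 \<noteq> f3"
      by (auto simp: card_3_iff)
    have in_Union: "u \<in> \<Union>M" "v \<in> \<Union>M" using e by auto
    have through_v: "f \<in> F" "v \<in> f" "u \<notin> f" if "f \<in> pendant F M v" for f
      using that in_Union e(4) unfolding pendant_def by auto
    have g': "g \<in> F" "u \<in> g" "v \<notin> g" using g in_Union e(4) unfolding pendant_def by auto
    have "\<exists>f\<in>{f1, f2, f3}. f \<inter> g = {}"
    proof (rule linear_sys_star_avoids_member[OF lin unif _ _ _ f(2-4) _ _ _ g'(3,1,2)])
      show "f1 \<in> F" "f2 \<in> F" "f3 \<in> F" "v \<in> f1" "v \<in> f2" "v \<in> f3"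
        using through_v(1,2) f(1) by auto
      show "u \<notin> f1 \<union> f2 \<union> f3" using through_v(3) f(1) by blast
    qed
    then obtain f where f': "f \<in> pendant F M v" "f \<inter> g = {}" using f(1) by blast
    have "f \<noteq> g" using f'(2) through_v(2)[OF f'(1)] g'(3) by blast
    with f' show "g \<in> {}"
      using no_two_for_one_exchange[OF e(1), of f g] g e(2,3) unfolding pendant_def by auto
  qed
qed simp

lemma sum_card_pendant_le:
  assumes lin: "linear_sys F" and unif: "uniform3 F" and e: "e \<in> M"
    and bound: "\<And>v. v \<in> e \<Longrightarrow> card (pendant F M v) \<le> b"
  shows "(\<Sum>v\<in>e. card (pendant F M v)) \<le> max b 6"
proof -
  have card_e: "card e = 3" and fin_e: "finite e"
    using unif subset e uniform3_finite_member unfolding uniform3_def by auto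
  show ?thesis
  proof (cases "\<exists>v\<in>e. 3 \<le> card (pendant F M v)")
    case True
    then obtain v where v: "v \<in> e" "3 \<le> card (pendant F M v)" by blast
    have "(\<Sum>w\<in>e - {v}. card (pendant F M w)) = 0"
      using pendant_exclusive[OF lin unif e _ v(1) _ v(2)] by simp
    then have "(\<Sum>w\<in>e. card (pendant F M w)) = card (pendant F M v)"
      using sum.remove[OF fin_e v(1), of "\<lambda>w. card (pendant F M w)"] by simp
    then show ?thesis using bound[OF v(1)] by simp
  next
    case False
    then have "(\<Sum>w\<in>e. card (pendant F M w)) \<le> card e * 2"
      using sum_bounded_above[of e "\<lambda>w. card (pendant F M w)" 2] by fastforce
    then show ?thesis using card_e by simp
  qed
qed

lemma card_nonmatching_star_le:
  assumes unif: "uniform3 F" and v: "v \<in> \<Union>M"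
  shows "card {A \<in> F - M. v \<in> A} \<le> max_degree F - 1"
proof -
  obtain e where e: "e \<in> M" "v \<in> e" using v by blast
  have "insert e {A \<in> F - M. v \<in> A} \<subseteq> star F v" unfolding star_def using e subset by auto
  then have "card (insert e {A \<in> F - M. v \<in> A}) \<le> card (star F v)"
    using finite_F by (intro card_mono) (auto simp: star_def)
  moreover have "card (insert e {A \<in> F - M. v \<in> A}) = card {A \<in> F - M. v \<in> A} + 1"
    using e(1) finite_F by simp
  ultimately have "card {A \<in> F - M. v \<in> A} + 1 \<le> card (star F v)" by simp
  moreover have "card (star F v) \<le> max_degree F"
    using e subset by (intro card_star_le_max_degree uniform3_finite_Union finite_F unif) blast
  ultimately show ?thesis by simp
qed

lemma card_pendant_le:
  assumes "uniform3 F" "v \<in> \<Union>M"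
  shows "card (pendant F M v) \<le> max_degree F - 1"
proof -
  have "pendant F M v \<subseteq> {A \<in> F - M. v \<in> A}" unfolding pendant_def by blast
  then have "card (pendant F M v) \<le> card {A \<in> F - M. v \<in> A}"
    using finite_F by (intro card_mono) auto
  then show ?thesis using card_nonmatching_star_le[OF assms] by linarith
qed

lemma sum_incidences_edge_le:
  assumes lin: "linear_sys F" and unif: "uniform3 F" and Delta_ge: "5 \<le> max_degree F"
    and e: "e \<in> M"
  shows "(\<Sum>v\<in>e. card {A \<in> F - M. v \<in> A} + card (pendant F M v)) \<le> 4 * max_degree F - 2"
proof -
  have card_e: "card e = 3" using unif subset e unfolding uniform3_def by auto
  have star_le: "card {A \<in> F - M. v \<in> A} \<le> max_degree F - 1" if "v \<in> e" for v
    using card_nonmatching_star_le[OF unif] that e by blast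
  have "(\<Sum>v\<in>e. card (pendant F M v)) \<le> max (max_degree F - 1) 6"
    using card_pendant_le[OF unif] e by (intro sum_card_pendant_le[OF lin unif e]) blast
  also have "\<dots> \<le> max_degree F + 1" using Delta_ge by simp
  finally have "(\<Sum>v\<in>e. card (pendant F M v)) \<le> max_degree F + 1" .
  moreover have "(\<Sum>v\<in>e. card {A \<in> F - M. v \<in> A}) \<le> card e * (max_degree F - 1)"
    using sum_bounded_above[OF star_le] by simp
  ultimately show ?thesis using card_e Delta_ge by (simp add: sum.distrib)
qed

lemma card_nonmatching_le:
  assumes lin: "linear_sys F" and unif: "uniform3 F" and Delta_ge: "5 \<le> max_degree F"
  shows "2 * card (F - M) \<le> card M * (4 * max_degree F - 2)"
proof -
  define V G where "V = \<Union>M" and "G = F - M"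
  have fin_V: "finite V" and fin_G: "finite G"
    using finite_M subset uniform3_finite_member[OF unif] finite_F unfolding V_def G_def by auto
  let ?w = "\<lambda>v. card {A \<in> G. v \<in> A} + card (pendant F M v)"
  have "2 * card G = (\<Sum>A\<in>G. 2)" by simp
  also have "\<dots> \<le> (\<Sum>A\<in>G. card {v \<in> V. v \<in> A} + card {v \<in> V. A \<inter> V = {v}})"
  proof (rule sum_mono)
    show "2 \<le> card {v \<in> V. v \<in> A} + card {v \<in> V. A \<inter> V = {v}}" if "A \<in> G" for A
    proof -
      have "A \<noteq> {}" using that unif unfolding G_def uniform3_def by force
      then have "A \<inter> V \<noteq> {}" using that member_meets_Union unfolding G_def V_def by blast
      moreover have "{v \<in> V. v \<in> A} = A \<inter> V" "{v \<in> V. A \<inter> V = {v}} = {v. A \<inter> V = {v}}" by auto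
      ultimately show ?thesis using two_le_card_plus_singleton[of "A \<inter> V"] fin_V by simp
    qed
  qed
  also have "\<dots> = (\<Sum>v\<in>V. card {A \<in> G. v \<in> A}) + (\<Sum>v\<in>V. card {A \<in> G. A \<inter> V = {v}})"
    using sum_multicount_gen[OF fin_V fin_G, of "\<lambda>v A. v \<in> A" "\<lambda>A. card {v \<in> V. v \<in> A}"]
      sum_multicount_gen[OF fin_V fin_G, of "\<lambda>v A. A \<inter> V = {v}" "\<lambda>A. card {v \<in> V. A \<inter> V = {v}}"]
    by (simp add: sum.distrib)
  also have "\<dots> = (\<Sum>v\<in>V. ?w v)"
    unfolding pendant_def G_def V_def by (simp add: sum.distrib)
  also have "\<dots> = (\<Sum>e\<in>M. \<Sum>v\<in>e. ?w v)"
    unfolding V_def using disjoint subset uniform3_finite_member[OF unif]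
    by (intro sum.Union_disjoint[simplified comp_def]) auto
  also have "\<dots> \<le> (\<Sum>e\<in>M. 4 * max_degree F - 2)"
    using sum_incidences_edge_le[OF lin unif Delta_ge] unfolding G_def by (intro sum_mono)
  finally show ?thesis unfolding G_def by simp
qed

end

theorem theorem1:
  fixes F :: "'a set set"
  assumes "finite F"
    and "uniform3 F"
    and "linear_sys F"
    and "max_degree F \<ge> 5"
  shows "card F \<le> 2 * max_degree F * matching_number F"
proof -
  obtain M where M: "is_matching F M" "card M = matching_number F"
    using matching_number_attained[OF assms(1)] by blast
  interpret maximum_matching F M
    using assms(1) M card_le_matching_number by unfold_locales auto
  have "card F = card M + card (F - M)"
    using subset finite_M assms(1) by (simp add: card_Diff_subset card_mono)
  then have "2 * card F \<le> 2 * card M + card M * (4 * max_degree F - 2)"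
    using card_nonmatching_le assms(2-4) by simp
  also have "\<dots> = 2 * (2 * max_degree F * card M)"
    using assms(4) by (simp add: algebra_simps)
  finally show ?thesis using M(2) by (simp add: ac_simps)
qed

end
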